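(* Let $0<r<1$. For every measurable $f$ on $\Omega$, $$\mu(\{\mathcal{P}f>\lambda\})\le\frac1r\,\mu(\{|f|>\lambda\}),\qquad\lambda\ge0.$$ In particular, for $p\in(0,\infty)$, $\|\mathcal{P}\|_{L^p(\Omega)\to L^p(\Omega)}\le r^{-1/p}$.
   Context: $(\Omega,\mathcal{F},\mu)$ is a probability space with a filtration $\{\mathcal{F}_k\}_{k\ge0}$ whose union generates $\mathcal{F}$; $\mathsf{E}_k=\mathsf{E}[\cdot|\mathcal{F}_k]$. The $k$-th conditional percentile at ratio $r$ is $\mathsf{P}^r_kf(x):=\inf\{t\in\mathbb{Q}:\mathsf{E}_k[\mathbf{1}_{\{f>t\}}](x)\le r\}$, and $\mathcal{P}f:=\mathcal{P}_rf:=\sup_{k\ge0}\mathsf{P}^r_k|f|$. *)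

theory Defs
  imports "HOL-Probability.Probability"
begin

definition cond_percentile ::
  "'a measure \<Rightarrow> 'a measure \<Rightarrow> real \<Rightarrow> ('a \<Rightarrow> real) \<Rightarrow> 'a \<Rightarrow> ereal" where
  "cond_percentile M F r f x =
     Inf {ereal (real_of_rat t) | t.
            real_cond_exp M F (indicator {y \<in> space M. f y > real_of_rat t}) x \<le> r}"

definition max_percentile ::
  "'a measure \<Rightarrow> (nat \<Rightarrow> 'a measure) \<Rightarrow> real \<Rightarrow> ('a \<Rightarrow> real) \<Rightarrow> 'a \<Rightarrow> ereal" where
  "max_percentile M Fs r f x = (SUP k. cond_percentile M (Fs k) r (\<lambda>y. \<bar>f y\<bar>) x)"

definition ereal_abs_powr :: "ereal \<Rightarrow> real \<Rightarrow> ennreal" where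
  "ereal_abs_powr v p = (case \<bar>v\<bar> of ereal a \<Rightarrow> ennreal (a powr p) | _ \<Rightarrow> \<infinity>)"

end

theory Submission
  imports Defs
begin

text \<open>Fix lam and let A = {|f| > lam}. If P f (x) > lam, then E_k[1_{|f| > t}](x) > r for some k
  and some rational t > lam, and E_k[1_{|f| > t}] <= E_k[1_A] almost surely. So, up to a null set,
  {P f > lam} lies in the set where the martingale E_k[1_A] ever exceeds r. Doob's maximal
  inequality bounds its measure by mu(A)/r: on the F_k-measurable set where r is first exceeded at
  time k, E_k[1_A] integrates like 1_A. The L^p bound follows by the layer-cake formula, as
  P f >= 0 almost surely when r < 1.\<close>

lemma emeasure_lborel_atLeast: "emeasure lborel {a::real..} = \<infinity>"
proof (rule ccontr)
  assume "emeasure lborel {a..} \<noteq> \<infinity>"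
  then obtain n :: nat where n: "emeasure lborel {a..} < of_nat n"
    using ennreal_Ex_less_of_nat[of "emeasure lborel {a..}"] by (auto simp: less_top[symmetric])
  have "of_nat n = emeasure lborel {a..<a + real n}"
    by (simp add: ennreal_of_nat_eq_real_of_nat)
  also have "\<dots> \<le> emeasure lborel {a..}"
    by (intro emeasure_mono) auto
  finally show False
    using n by (meson leD)
qed

lemma emeasure_lborel_nonneg_less: "emeasure lborel {s::real. 0 \<le> s \<and> ennreal s < c} = c"
proof (cases c)
  case (real a)
  then have "{s. 0 \<le> s \<and> ennreal s < c} = {0..<a}"
    by (auto simp: ennreal_less_iff)
  then show ?thesis
    using real by simp
next
  case top
  then have "{s. 0 \<le> s \<and> ennreal s < c} = {0..}"
    by auto
  then show ?thesis
    using top by (simp add: emeasure_lborel_atLeast)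
qed

lemma nn_integral_layer_cake:
  assumes "sigma_finite_measure M" and [measurable]: "g \<in> borel_measurable M"
  shows "(\<integral>\<^sup>+x. g x \<partial>M) = (\<integral>\<^sup>+s\<in>{0..}. emeasure M {x\<in>space M. ennreal s < g x} \<partial>lborel)"
proof -
  interpret pair_sigma_finite M lborel
    using assms(1) by (simp add: pair_sigma_finite_def sigma_finite_lborel)
  let ?I = "\<lambda>x s. if 0 \<le> s \<and> ennreal s < g x then 1 else 0 :: ennreal"
  have vertical: "(\<integral>\<^sup>+s. ?I x s \<partial>lborel) = g x" for x
  proof -
    have "(\<integral>\<^sup>+s. ?I x s \<partial>lborel) = (\<integral>\<^sup>+s. indicator {s. 0 \<le> s \<and> ennreal s < g x} s \<partial>lborel)"
      by (intro nn_integral_cong) (simp add: indicator_def)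
    also have "\<dots> = emeasure lborel {s. 0 \<le> s \<and> ennreal s < g x}"
      by (intro nn_integral_indicator) measurable
    finally show ?thesis
      by (simp add: emeasure_lborel_nonneg_less)
  qed
  have horizontal: "(\<integral>\<^sup>+x. ?I x s \<partial>M) = emeasure M {x\<in>space M. ennreal s < g x} * indicator {0..} s" for s
  proof -
    have "(\<integral>\<^sup>+x. ?I x s \<partial>M) = (\<integral>\<^sup>+x. indicator {0..} s * indicator {x\<in>space M. ennreal s < g x} x \<partial>M)"
      by (intro nn_integral_cong) (auto simp: indicator_def)
    also have "\<dots> = indicator {0..} s * emeasure M {x\<in>space M. ennreal s < g x}"
      by (intro nn_integral_cmult_indicator) measurable
    finally show ?thesis
      by (simp add: mult.commute)
  qed
  have "(\<integral>\<^sup>+x. g x \<partial>M) = (\<integral>\<^sup>+x. (\<integral>\<^sup>+s. ?I x s \<partial>lborel) \<partial>M)"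
    by (simp add: vertical)
  also have "\<dots> = (\<integral>\<^sup>+s. (\<integral>\<^sup>+x. ?I x s \<partial>M) \<partial>lborel)"
    by (rule Fubini'[symmetric]) measurable
  finally show ?thesis
    by (simp add: horizontal)
qed

lemma nn_integral_le_of_emeasure_superlevel_le:
  assumes "sigma_finite_measure M"
    and [measurable]: "g \<in> borel_measurable M" "h \<in> borel_measurable M"
    and le: "\<And>s. 0 \<le> s \<Longrightarrow>
      emeasure M {x\<in>space M. ennreal s < g x} \<le> c * emeasure M {x\<in>space M. ennreal s < h x}"
  shows "(\<integral>\<^sup>+x. g x \<partial>M) \<le> c * (\<integral>\<^sup>+x. h x \<partial>M)"
proof -
  interpret sigma_finite_measure M by fact
  have [measurable]: "(\<lambda>s. emeasure M {x\<in>space M. ennreal s < h x}) \<in> borel_measurable lborel"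
    by measurable
  have "(\<integral>\<^sup>+x. g x \<partial>M) = (\<integral>\<^sup>+s\<in>{0..}. emeasure M {x\<in>space M. ennreal s < g x} \<partial>lborel)"
    using nn_integral_layer_cake assms(1,2) .
  also have "\<dots> \<le> (\<integral>\<^sup>+s\<in>{0..}. c * emeasure M {x\<in>space M. ennreal s < h x} \<partial>lborel)"
    by (intro nn_integral_mono) (simp add: indicator_def le)
  also have "\<dots> = c * (\<integral>\<^sup>+s\<in>{0..}. emeasure M {x\<in>space M. ennreal s < h x} \<partial>lborel)"
    by (subst nn_integral_cmult[symmetric]) (simp_all add: mult.assoc)
  also have "\<dots> = c * (\<integral>\<^sup>+x. h x \<partial>M)"
    using nn_integral_layer_cake[OF assms(1,3)] by simp
  finally show ?thesis .
qed

lemma less_powr_iff_powr_inverse_less: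
  fixes s a p :: real
  assumes "0 \<le> s" "0 \<le> a" "0 < p"
  shows "s < a powr p \<longleftrightarrow> s powr (1/p) < a"
proof
  assume "s < a powr p"
  then have "s powr (1/p) < (a powr p) powr (1/p)"
    using assms by (intro powr_less_mono2) auto
  then show "s powr (1/p) < a"
    using assms by (simp add: powr_powr)
next
  assume "s powr (1/p) < a"
  then have "(s powr (1/p)) powr p < a powr p"
    using assms by (intro powr_less_mono2) auto
  then show "s < a powr p"
    using assms by (simp add: powr_powr)
qed

lemma ennreal_less_ereal_abs_powr_iff:
  assumes "0 \<le> s" "0 < p"
  shows "ennreal s < ereal_abs_powr v p \<longleftrightarrow> ereal (s powr (1/p)) < \<bar>v\<bar>"
proof (cases v)
  case (real a)
  then show ?thesis
    using assms less_powr_iff_powr_inverse_less[of s "\<bar>a\<bar>" p]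
    by (simp add: ereal_abs_powr_def ennreal_less_iff)
qed (auto simp: ereal_abs_powr_def)

lemma borel_measurable_ereal_abs_powr [measurable]:
  assumes [measurable]: "g \<in> borel_measurable M"
  shows "(\<lambda>x. ereal_abs_powr (g x) p) \<in> borel_measurable M"
proof -
  have "ereal_abs_powr v p = (if \<bar>v\<bar> = \<infinity> then \<infinity> else ennreal (real_of_ereal \<bar>v\<bar> powr p))" for v
    by (cases v) (auto simp: ereal_abs_powr_def)
  then show ?thesis
    by (simp only:) measurable
qed

lemma Inf_setcompr_eq_INF_if:
  fixes f :: "'a \<Rightarrow> 'b::complete_lattice"
  shows "Inf {f t |t. P t} = (INF t. if P t then f t else top)"
proof (rule antisym)
  show "Inf {f t |t. P t} \<le> (INF t. if P t then f t else top)"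
    by (rule INF_greatest) (auto intro: Inf_lower)
  show "(INF t. if P t then f t else top) \<le> Inf {f t |t. P t}"
  proof (rule Inf_greatest, clarify)
    fix t
    assume "P t"
    then show "(INF t. if P t then f t else top) \<le> f t"
      by (intro INF_lower2[of t]) auto
  qed
qed

lemma borel_measurable_max_percentile [measurable]:
  "max_percentile M Fs r f \<in> borel_measurable M"
  unfolding max_percentile_def cond_percentile_def Inf_setcompr_eq_INF_if by measurable

lemma less_cond_percentileE:
  assumes "ereal lam < cond_percentile M F r g x"
  obtains t where "lam < real_of_rat t"
    and "r < real_cond_exp M F (indicator {y\<in>space M. real_of_rat t < g y}) x"
proof -
  obtain b :: real where b: "ereal lam < ereal b" "ereal b < cond_percentile M F r g x"
    using ereal_dense2[OF assms] by blast
  from b(1) have "lam < b"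
    by simp
  then obtain q where q: "q \<in> \<rat>" "lam < q" "q < b"
    using Rats_dense_in_real by blast
  from q(1) obtain t where t: "q = real_of_rat t"
    by (rule Rats_cases)
  have "\<not> real_cond_exp M F (indicator {y\<in>space M. real_of_rat t < g y}) x \<le> r"
  proof
    assume "real_cond_exp M F (indicator {y\<in>space M. real_of_rat t < g y}) x \<le> r"
    then have "cond_percentile M F r g x \<le> ereal q"
      unfolding cond_percentile_def t by (intro Inf_lower) auto
    also have "ereal q < ereal b"
      using q(3) by simp
    finally show False
      using b(2) by (rule less_asym)
  qed
  show thesis
  proof (rule that)
    show "lam < real_of_rat t"
      using q(2) t by simp
    show "r < real_cond_exp M F (indicator {y\<in>space M. real_of_rat t < g y}) x"
      using \<open>\<not> _ \<le> r\<close> by simp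
  qed
qed

context finite_measure_subalgebra
begin

lemma AE_less_cond_percentile_imp:
  assumes [measurable]: "g \<in> borel_measurable M"
  shows "AE x in M. ereal lam < cond_percentile M F r g x \<longrightarrow>
    r < real_cond_exp M F (indicator {y\<in>space M. lam < g y}) x"
proof -
  let ?E = "\<lambda>c. real_cond_exp M F (indicator {y\<in>space M. c < g y})"
  have "AE x in M. \<forall>t. lam < real_of_rat t \<longrightarrow> ?E (real_of_rat t) x \<le> ?E lam x"
    unfolding AE_all_countable
  proof
    fix t
    show "AE x in M. lam < real_of_rat t \<longrightarrow> ?E (real_of_rat t) x \<le> ?E lam x"
    proof (cases "lam < real_of_rat t")
      case True
      then have "AE x in M. ?E (real_of_rat t) x \<le> ?E lam x"
        by (intro real_cond_exp_mono) (auto simp: indicator_def less_top[symmetric])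
      then show ?thesis
        by auto
    qed simp
  qed
  then show ?thesis
  proof eventually_elim
    case (elim x)
    show ?case
    proof
      assume "ereal lam < cond_percentile M F r g x"
      then obtain t where "lam < real_of_rat t" "r < ?E (real_of_rat t) x"
        by (rule less_cond_percentileE)
      moreover have "?E (real_of_rat t) x \<le> ?E lam x"
        using elim \<open>lam < real_of_rat t\<close> by blast
      ultimately show "r < ?E lam x"
        by linarith
    qed
  qed
qed

lemma AE_cond_percentile_nonneg:
  assumes "r < 1" and [measurable]: "g \<in> borel_measurable M" and "AE y in M. 0 \<le> g y"
  shows "AE x in M. 0 \<le> cond_percentile M F r g x"
proof -
  let ?E = "\<lambda>t. real_cond_exp M F (indicator {y\<in>space M. real_of_rat t < g y})"
  have "AE x in M. \<forall>t. real_of_rat t < 0 \<longrightarrow> 1 \<le> ?E t x"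
    unfolding AE_all_countable
  proof
    fix t
    show "AE x in M. real_of_rat t < 0 \<longrightarrow> 1 \<le> ?E t x"
    proof (cases "real_of_rat t < 0")
      case True
      then have below_g: "real_of_rat t < g y" if "0 \<le> g y" for y
        using that by linarith
      have "AE y in M. (1::real) \<le> indicator {y\<in>space M. real_of_rat t < g y} y"
        using AE_space assms(3) by eventually_elim (auto simp: indicator_def below_g)
      then have "AE x in M. 1 \<le> ?E t x"
        by (intro real_cond_exp_ge_c) (auto simp: less_top[symmetric])
      then show ?thesis
        by auto
    qed simp
  qed
  then show ?thesis
  proof eventually_elim
    case (elim x)
    show ?case
      unfolding cond_percentile_def
    proof (rule Inf_greatest, clarify)
      fix t
      assume "?E t x \<le> r"
      then show "0 \<le> ereal (real_of_rat t)"
        using elim \<open>r < 1\<close> by (cases "real_of_rat t < 0") auto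
    qed
  qed
qed

end

lemma finite_measure_subalgebraI:
  "finite_measure M \<Longrightarrow> subalgebra M F \<Longrightarrow> finite_measure_subalgebra M F"
  by (simp add: finite_measure_subalgebra_def finite_measure_subalgebra_axioms_def)

lemma AE_max_percentile_nonneg:
  assumes "finite_measure M" "subalgebra M (Fs k)" "r < 1" "f \<in> borel_measurable M"
  shows "AE x in M. 0 \<le> max_percentile M Fs r f x"
proof -
  interpret finite_measure_subalgebra M "Fs k"
    using assms(1,2) by (rule finite_measure_subalgebraI)
  have "AE x in M. 0 \<le> cond_percentile M (Fs k) r (\<lambda>y. \<bar>f y\<bar>) x"
    using assms(3,4) by (intro AE_cond_percentile_nonneg) auto
  then show ?thesis
  proof eventually_elim
    case (elim x)
    also have "cond_percentile M (Fs k) r (\<lambda>y. \<bar>f y\<bar>) x \<le> max_percentile M Fs r f x"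
      unfolding max_percentile_def by (rule SUP_upper) simp
    finally show ?case .
  qed
qed

lemma (in finite_measure_subalgebra) measure_Int_ge_of_cond_exp_indicator_ge:
  assumes [measurable]: "A \<in> sets M" and D_F: "D \<in> sets F"
    and ge: "\<And>x. x \<in> D \<Longrightarrow> r \<le> real_cond_exp M F (indicator A) x"
  shows "r * measure M D \<le> measure M (D \<inter> A)"
proof -
  let ?g = "real_cond_exp M F (indicator A)"
  have integrable_A: "integrable M (indicator A :: 'a \<Rightarrow> real)"
    by (simp add: less_top[symmetric])
  have D_M: "D \<in> sets M"
    using D_F subalg by (auto simp: subalgebra_def)
  have "r * measure M D = (\<integral>x. r * indicator D x \<partial>M)"
    using D_M by simp
  also have "\<dots> \<le> (\<integral>x. ?g x * indicator D x \<partial>M)"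
  proof (rule integral_mono)
    show "integrable M (\<lambda>x. r * indicator D x)"
      by (rule integrable_real_mult_indicator[OF D_M integrable_const])
    show "integrable M (\<lambda>x. ?g x * indicator D x)"
      by (rule integrable_real_mult_indicator[OF D_M real_cond_exp_int(1)[OF integrable_A]])
    show "r * indicator D x \<le> ?g x * indicator D x" for x
      using ge by (auto simp: indicator_def)
  qed
  also have "\<dots> = (\<integral>x\<in>D. ?g x \<partial>M)"
    by (simp add: set_lebesgue_integral_def mult.commute)
  also have "\<dots> = (\<integral>x\<in>D. indicator A x \<partial>M)"
    by (rule real_cond_exp_intA[OF integrable_A D_F, symmetric])
  also have "\<dots> = (\<integral>x. indicator (D \<inter> A) x \<partial>M)"
    by (simp add: set_lebesgue_integral_def indicator_inter_arith)
  also have "\<dots> = measure M (D \<inter> A)"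
    using D_M by simp
  finally show ?thesis .
qed

lemma doob_maximal_indicator:
  assumes "finite_measure M"
    and subalg: "\<And>k. subalgebra M (Fs k)"
    and mono: "\<And>k. sets (Fs k) \<subseteq> sets (Fs (Suc k))"
    and [measurable]: "A \<in> sets M"
  shows "r * measure M (\<Union>k. {x\<in>space M. r < real_cond_exp M (Fs k) (indicator A) x})
    \<le> measure M A"
proof -
  interpret finite_measure M by fact
  define E where "E k = {x\<in>space M. r < real_cond_exp M (Fs k) (indicator A) x}" for k
  define D where "D = disjointed E"
  have E_F: "E k \<in> sets (Fs k)" for k
  proof -
    have "E k = {x\<in>space (Fs k). r < real_cond_exp M (Fs k) (indicator A) x}"
      using subalg[of k] by (simp add: E_def subalgebra_def)
    also have "\<dots> \<in> sets (Fs k)"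
      by measurable
    finally show ?thesis .
  qed
  have sets_mono: "sets (Fs j) \<subseteq> sets (Fs k)" if "j \<le> k" for j k
    using lift_Suc_mono_le[of "\<lambda>k. sets (Fs k)", OF mono that] .
  have D_F: "D k \<in> sets (Fs k)" for k
    unfolding D_def disjointed_def
    using E_F by (intro sets.Diff sets.finite_UN) (auto intro!: subsetD[OF sets_mono E_F])
  have D_M [measurable]: "D k \<in> sets M" for k
    using D_F subalg[of k] by (auto simp: subalgebra_def)
  have first_exceedance: "r * measure M (D k) \<le> measure M (D k \<inter> A)" for k
    using disjointed_subset[of E k]
    by (intro finite_measure_subalgebra.measure_Int_ge_of_cond_exp_indicator_ge
        [OF finite_measure_subalgebraI[OF assms(1) subalg[of k]]] D_F) (auto simp: D_def E_def)
  have "(\<lambda>k. measure M (D k)) sums measure M (\<Union>k. D k)"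
    using D_M by (intro finite_measure_UNION) (auto simp: D_def disjoint_family_disjointed)
  then have "(\<lambda>k. r * measure M (D k)) sums (r * measure M (\<Union>k. E k))"
    unfolding D_def UN_disjointed_eq by (rule sums_mult)
  moreover have "(\<lambda>k. measure M (D k \<inter> A)) sums measure M (\<Union>k. D k \<inter> A)"
  proof (rule finite_measure_UNION)
    show "disjoint_family (\<lambda>k. D k \<inter> A)"
      using disjoint_family_disjointed[of E] unfolding D_def disjoint_family_on_def by blast
  qed auto
  ultimately have "r * measure M (\<Union>k. E k) \<le> measure M (\<Union>k. D k \<inter> A)"
    using first_exceedance by (rule sums_le[rotated])
  also have "\<dots> \<le> measure M A"
    by (intro finite_measure_mono) auto
  finally show ?thesis
    by (simp add: E_def)
qed

lemma emeasure_max_percentile_greater_le: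
  assumes "finite_measure M"
    and subalg: "\<And>k. subalgebra M (Fs k)"
    and mono: "\<And>k. sets (Fs k) \<subseteq> sets (Fs (Suc k))"
    and "0 < r" and [measurable]: "f \<in> borel_measurable M"
  shows "emeasure M {x\<in>space M. ereal lam < max_percentile M Fs r f x}
    \<le> ennreal (1/r) * emeasure M {x\<in>space M. lam < \<bar>f x\<bar>}"
proof -
  interpret finite_measure M by fact
  define A where "A = {x\<in>space M. lam < \<bar>f x\<bar>}"
  define E where "E k = {x\<in>space M. r < real_cond_exp M (Fs k) (indicator A) x}" for k
  have "AE x in M. ereal lam < cond_percentile M (Fs k) r (\<lambda>y. \<bar>f y\<bar>) x \<longrightarrow>
      r < real_cond_exp M (Fs k) (indicator A) x" for k
    unfolding A_def
    by (rule finite_measure_subalgebra.AE_less_cond_percentile_imp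
        [OF finite_measure_subalgebraI[OF assms(1) subalg]]) measurable
  then have "AE x in M. \<forall>k. ereal lam < cond_percentile M (Fs k) r (\<lambda>y. \<bar>f y\<bar>) x \<longrightarrow>
      r < real_cond_exp M (Fs k) (indicator A) x"
    by (simp add: AE_all_countable)
  then have "AE x in M. x \<in> {x\<in>space M. ereal lam < max_percentile M Fs r f x} \<longrightarrow> x \<in> (\<Union>k. E k)"
    by eventually_elim (auto simp: max_percentile_def less_SUP_iff E_def)
  then have "emeasure M {x\<in>space M. ereal lam < max_percentile M Fs r f x} \<le> emeasure M (\<Union>k. E k)"
    by (rule emeasure_mono_AE) (simp add: E_def)
  also have "\<dots> \<le> ennreal (1/r * measure M A)"
    using doob_maximal_indicator[of M Fs A r, OF assms(1) subalg mono] \<open>0 < r\<close>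
    by (simp add: emeasure_eq_measure E_def A_def field_simps)
  also have "\<dots> = ennreal (1/r) * emeasure M A"
    using \<open>0 < r\<close> by (simp add: emeasure_eq_measure flip: ennreal_mult)
  finally show ?thesis
    by (simp add: A_def)
qed

lemma nn_integral_max_percentile_powr_le:
  assumes "finite_measure M"
    and subalg: "\<And>k. subalgebra M (Fs k)"
    and mono: "\<And>k. sets (Fs k) \<subseteq> sets (Fs (Suc k))"
    and "0 < r" "r < 1" and [measurable]: "f \<in> borel_measurable M" and "0 < p"
  shows "(\<integral>\<^sup>+x. ereal_abs_powr (max_percentile M Fs r f x) p \<partial>M)
    \<le> ennreal (1/r) * (\<integral>\<^sup>+x. ennreal (\<bar>f x\<bar> powr p) \<partial>M)"
proof -
  interpret finite_measure M by fact
  show ?thesis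
  proof (rule nn_integral_le_of_emeasure_superlevel_le[OF sigma_finite_measure_axioms])
    show "(\<lambda>x. ereal_abs_powr (max_percentile M Fs r f x) p) \<in> borel_measurable M"
      by measurable
    show "(\<lambda>x. ennreal (\<bar>f x\<bar> powr p)) \<in> borel_measurable M"
      by measurable
    fix s :: real
    assume "0 \<le> s"
    let ?P = "max_percentile M Fs r f" and ?l = "s powr (1/p)"
    have "AE x in M. \<bar>?P x\<bar> = ?P x"
      using AE_max_percentile_nonneg[of M Fs 0 r f, OF assms(1) subalg \<open>r < 1\<close> assms(6)]
      by eventually_elim (simp add: abs_ereal_pos)
    then have "emeasure M {x\<in>space M. ennreal s < ereal_abs_powr (?P x) p}
        \<le> emeasure M {x\<in>space M. ereal ?l < ?P x}"
      using \<open>0 \<le> s\<close> \<open>0 < p\<close> by (intro emeasure_mono_AE) (auto simp: ennreal_less_ereal_abs_powr_iff)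
    also have "\<dots> \<le> ennreal (1/r) * emeasure M {x\<in>space M. ?l < \<bar>f x\<bar>}"
      using emeasure_max_percentile_greater_le[of M Fs r f ?l, OF assms(1) subalg mono \<open>0 < r\<close>]
      by simp
    also have "{x\<in>space M. ?l < \<bar>f x\<bar>} = {x\<in>space M. ennreal s < ennreal (\<bar>f x\<bar> powr p)}"
      using \<open>0 \<le> s\<close> \<open>0 < p\<close> ennreal_less_ereal_abs_powr_iff[of s p "ereal (f _)"]
      by (simp add: ereal_abs_powr_def)
    finally show "emeasure M {x\<in>space M. ennreal s < ereal_abs_powr (?P x) p}
        \<le> ennreal (1/r) * emeasure M {x\<in>space M. ennreal s < ennreal (\<bar>f x\<bar> powr p)}" .
  qed
qed

theorem lemma1p1:
  fixes M :: "'a measure" and Fs :: "nat \<Rightarrow> 'a measure" and r :: real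
    and f :: "'a \<Rightarrow> real"
  assumes "prob_space M"
    and "\<And>k. subalgebra M (Fs k)"
    and "\<And>k. sets (Fs k) \<subseteq> sets (Fs (Suc k))"
    and "sets M = sigma_sets (space M) (\<Union>k. sets (Fs k))"
    and "0 < r" and "r < 1"
    and "f \<in> borel_measurable M"
  shows "(\<forall>lam::real. lam \<ge> 0 \<longrightarrow>
            measure M {x \<in> space M. max_percentile M Fs r f x > ereal lam}
              \<le> (1 / r) * measure M {x \<in> space M. \<bar>f x\<bar> > lam})
       \<and> (\<forall>p::real. p > 0 \<longrightarrow>
            (\<integral>\<^sup>+ x. ereal_abs_powr (max_percentile M Fs r f x) p \<partial>M)
              \<le> ennreal (1 / r) * (\<integral>\<^sup>+ x. ennreal (\<bar>f x\<bar> powr p) \<partial>M))"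
proof -
  interpret prob_space M by fact
  have "measure M {x \<in> space M. max_percentile M Fs r f x > ereal lam}
      \<le> (1 / r) * measure M {x \<in> space M. \<bar>f x\<bar> > lam}" for lam
    using emeasure_max_percentile_greater_le[of M Fs r f lam, OF finite_measure_axioms assms(2,3,5,7)]
      \<open>0 < r\<close>
    by (simp add: emeasure_eq_measure ennreal_mult[symmetric] ennreal_le_iff)
  moreover have "(\<integral>\<^sup>+ x. ereal_abs_powr (max_percentile M Fs r f x) p \<partial>M)
      \<le> ennreal (1 / r) * (\<integral>\<^sup>+ x. ennreal (\<bar>f x\<bar> powr p) \<partial>M)" if "0 < p" for p
    by (rule nn_integral_max_percentile_powr_le[of M Fs r f p, OF finite_measure_axioms assms(2,3,5,6,7) that])
  ultimately show ?thesis
    by blast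
qed

end
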